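(* Every pluri-diamond $u:[0,1]\to{\bf Q}_2(\mathbb{R})$ is a Dirichlet $4$-quasiminimizer on $(0,1)$, i.e. for every interval $(a,b)\subset(0,1)$, $\mathrm{Dir}(u;(a,b))\le 4\,\mathrm{Dir}(v;(a,b))$ where $v$ is Dirichlet minimizing on $(a,b)$ with $v(a)=u(a)$, $v(b)=u(b)$.
   Context: ${\bf Q}_2(\mathbb{R})$ is the space of unordered pairs $[[x]]+[[y]]$ of reals with metric $\mathcal{G}([[x_1]]+[[x_2]],[[y_1]]+[[y_2]])=\min_\sigma(\sum_i|x_i-y_{\sigma(i)}|^2)^{1/2}$. For a Lipschitz $u=[[u_1]]+[[u_2]]$ with $u_1\le u_2$ on an interval $I$, $\mathrm{Dir}(u;I)=\int_I(u_1')^2+(u_2')^2\,dx$; $v$ is Dirichlet minimizing on $(a,b)$ with given endpoint values if it minimizes $\mathrm{Dir}(\cdot;(a,b))$ among (Sobolev) ${\bf Q}_2(\mathbb{R})$-valued functions with those endpoint values. A diamond above $[a,b]$ is a map $u:[a,b]\to{\bf Q}_2(\mathbb{R})$ whose graph is the parallelogram with vertices $(a,h),((a+b)/2,h),((a+b)/2,h+(b-a)/2),(b,h+(b-a)/2)$ for some $h\in\mathbb{R}$ (one branch is constant $h$ on $[a,(a+b)/2]$ then has slope $1$; the other has slope $1$ on $[a,(a+b)/2]$ then is constant). A pluri-diamond is a continuous $u:[0,1]\to{\bf Q}_2(\mathbb{R})$ admitting a partition of $[0,1]$ into intervals $I_j$ such that on each $I_j$, $u$ is either a diamond or of the form $x\mapsto2[[x+p_j]]$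 with $p_j\in\mathbb{R}$. *)

theory Defs
  imports "HOL-Analysis.Analysis"
begin

text \<open>A map into Q_2(R) (unordered pairs of reals) is represented by its sorted
  selection: two real functions q1 \<le> q2, the unordered pair at x being [[q1 x]] + [[q2 x]].\<close>

definition W12 :: "real \<Rightarrow> real \<Rightarrow> (real \<Rightarrow> real) \<Rightarrow> bool" where
  "W12 a b f \<longleftrightarrow> (\<exists>g. g absolutely_integrable_on {a..b} \<and> (\<lambda>x. (g x)\<^sup>2) integrable_on {a..b}
     \<and> (\<forall>x\<in>{a..b}. f x = f a + integral {a..x} g))"

definition Q2_sobolev :: "real \<Rightarrow> real \<Rightarrow> (real \<Rightarrow> real) \<Rightarrow> (real \<Rightarrow> real) \<Rightarrow> bool" where
  "Q2_sobolev a b q1 q2 \<longleftrightarrow> (\<forall>x\<in>{a..b}. q1 x \<le> q2 x) \<and> W12 a b q1 \<and> W12 a b q2"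

definition Dir :: "real \<Rightarrow> real \<Rightarrow> (real \<Rightarrow> real) \<Rightarrow> (real \<Rightarrow> real) \<Rightarrow> real" where
  "Dir a b q1 q2 = integral {a..b} (\<lambda>x. (deriv q1 x)\<^sup>2 + (deriv q2 x)\<^sup>2)"

text \<open>v = [[v1]]+[[v2]] is Dirichlet minimizing on (a,b) among Sobolev maps with
  the same endpoint values (equality of unordered pairs = equality of sorted pairs).\<close>
definition dir_minimizing :: "real \<Rightarrow> real \<Rightarrow> (real \<Rightarrow> real) \<Rightarrow> (real \<Rightarrow> real) \<Rightarrow> bool" where
  "dir_minimizing a b v1 v2 \<longleftrightarrow> Q2_sobolev a b v1 v2 \<and>
     (\<forall>w1 w2. Q2_sobolev a b w1 w2 \<and> w1 a = v1 a \<and> w2 a = v2 a \<and> w1 b = v1 b \<and> w2 b = v2 b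
        \<longrightarrow> Dir a b v1 v2 \<le> Dir a b w1 w2)"

text \<open>On the interval I, u is a diamond above [a,b] (closure of I), at height h.
  Sorted branches: lower = h + max 0 (x - m), upper = h + min (x - a) (m - a), m = (a+b)/2.\<close>
definition diamond_on :: "real set \<Rightarrow> (real \<Rightarrow> real) \<Rightarrow> (real \<Rightarrow> real) \<Rightarrow> bool" where
  "diamond_on I u1 u2 \<longleftrightarrow> (\<exists>a b h. a < b \<and> I \<subseteq> {a..b} \<and> {a<..<b} \<subseteq> I \<and>
     (\<forall>x\<in>I. u1 x = h + max 0 (x - (a + b) / 2) \<and> u2 x = h + min (x - a) ((b - a) / 2)))"

definition pluri_diamond :: "(real \<Rightarrow> real) \<Rightarrow> (real \<Rightarrow> real) \<Rightarrow> bool" where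
  "pluri_diamond u1 u2 \<longleftrightarrow>
     continuous_on {0..1} u1 \<and> continuous_on {0..1} u2 \<and> (\<forall>x\<in>{0..1}. u1 x \<le> u2 x) \<and>
     (\<exists>\<I>. countable \<I> \<and> \<Union>\<I> = {0..1} \<and> pairwise disjnt \<I> \<and>
        (\<forall>I\<in>\<I>. I \<noteq> {} \<and> is_interval I \<and>
           (diamond_on I u1 u2 \<or> (\<exists>p. \<forall>x\<in>I. u1 x = x + p \<and> u2 x = x + p))))"

end

theory Submission
  imports Defs
begin

text \<open>Away from countably many points (ends of the pieces and midpoints of the diamonds) the
  two branches of a pluri-diamond are locally affine with slope pair (1,1), (0,1) or (1,0).
  Hence Dir(u;(a,b)) \<le> 2(b-a), and u1 + u2 - x is nondecreasing, so the two branches together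
  increase by at least b - a over [a,b]. For any Sobolev map v with the same endpoint values,
  Cauchy-Schwarz on each branch gives Dir(v;(a,b)) \<ge> (\<Delta>1^2 + \<Delta>2^2)/(b-a) \<ge> (b-a)/2.
  Identifying deriv v with the W^{1,2} density requires the Lebesgue differentiation theorem,
  which follows from its one-sided version applied to the density and to its reflection.\<close>

section \<open>Lebesgue differentiation\<close>

lemma negligible_uminus_image:
  fixes N :: "real set"
  assumes "negligible N"
  shows "negligible (uminus ` N)"
proof (rule negligible_locally_Lipschitz_image[OF _ assms])
  show "\<exists>T B. open T \<and> x \<in> T \<and> (\<forall>y\<in>N \<inter> T. norm (- y - - x) \<le> B * norm (y - x))" for x
    by (rule exI[of _ UNIV], rule exI[of _ 1]) (simp add: abs_minus_commute)
qed auto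

lemma integral_right_quotient_tendsto_ae:
  fixes g :: "real \<Rightarrow> real"
  assumes "\<And>c d. g integrable_on {c..d}"
  obtains N where "negligible N"
    "\<And>x. x \<notin> N \<Longrightarrow> ((\<lambda>y. integral {x..y} g / (y - x)) \<longlongrightarrow> g x) (at_right x)"
proof -
  obtain N where N: "negligible N" and lim: "\<And>x e. \<lbrakk>x \<notin> N; 0 < e\<rbrakk> \<Longrightarrow>
       \<exists>d>0. \<forall>h. 0 < h \<and> h < d \<longrightarrow> norm (integral (cbox x (x + h *\<^sub>R One)) g /\<^sub>R h ^ DIM(real) - g x) < e"
    using integrable_ccontinuous_explicit[of g] assms by (metis cbox_interval)
  have "((\<lambda>y. integral {x..y} g / (y - x)) \<longlongrightarrow> g x) (at_right x)" if xN: "x \<notin> N" for x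
    unfolding tendsto_iff eventually_at_right_field
  proof (intro allI impI)
    fix e :: real assume "0 < e"
    then obtain d where "d > 0" and d: "\<And>h. 0 < h \<Longrightarrow> h < d \<Longrightarrow> \<bar>integral {x..x+h} g / h - g x\<bar> < e"
      using lim[OF xN \<open>0 < e\<close>] by (auto simp: divide_inverse_commute)
    show "\<exists>b>x. \<forall>y>x. y < b \<longrightarrow> dist (integral {x..y} g / (y - x)) (g x) < e"
      using d[of "_ - x"] \<open>d > 0\<close> by (intro exI[of _ "x + d"]) (auto simp: dist_real_def)
  qed
  with N that show ?thesis by blast
qed

lemma integral_has_real_derivative_ae:
  fixes g :: "real \<Rightarrow> real"
  assumes g: "g integrable_on {a..b}"
  obtains N where "negligible N"
    "\<And>x. x \<in> {a<..<b} - N \<Longrightarrow> ((\<lambda>y. integral {a..y} g) has_real_derivative g x) (at x)"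
proof -
  define g0 where "g0 x = (if x \<in> {a..b} then g x else 0)" for x
  have g0_int: "g0 integrable_on {c..d}" for c d
  proof -
    have "g0 integrable_on UNIV"
      using g unfolding g0_def by (simp only: Henstock_Kurzweil_Integration.integrable_restrict_UNIV)
    then show ?thesis by (rule integrable_on_subinterval) auto
  qed
  have g0_reflect_int: "(\<lambda>x. g0 (- x)) integrable_on {c..d}" for c d
    using Henstock_Kurzweil_Integration.integrable_reflect_real[where f=g0 and a="- d" and b="- c"] g0_int by simp
  obtain N1 where N1: "negligible N1" and right:
    "\<And>x. x \<notin> N1 \<Longrightarrow> ((\<lambda>y. integral {x..y} g0 / (y - x)) \<longlongrightarrow> g0 x) (at_right x)"
    using integral_right_quotient_tendsto_ae[OF g0_int] by blast
  \<comment> \<open>left difference quotients of g are right difference quotients of its reflection\<close>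
  obtain N2 where N2: "negligible N2" and left:
    "\<And>x. x \<notin> N2 \<Longrightarrow> ((\<lambda>y. integral {x..y} (\<lambda>t. g0 (- t)) / (y - x)) \<longlongrightarrow> g0 (- x)) (at_right x)"
    using integral_right_quotient_tendsto_ae[OF g0_reflect_int] by blast
  define F where "F y = integral {a..y} g0" for y
  have F_diff: "F z - F y = integral {y..z} g0" if "a \<le> y" "y \<le> z" for y z
    using Henstock_Kurzweil_Integration.integral_combine[OF that g0_int] unfolding F_def by simp
  have F_deriv: "(F has_real_derivative g x) (at x)" if x: "x \<in> {a<..<b}" "x \<notin> N1" "- x \<notin> N2" for x
    unfolding has_field_derivative_iff
  proof (rule filterlim_split_at)
    have "eventually (\<lambda>y. integral {x..y} g0 / (y - x) = (F y - F x) / (y - x)) (at_right x)"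
      unfolding eventually_at_right_field using x by (auto intro!: exI[of _ b] simp: F_diff)
    with right[OF x(2)] show "((\<lambda>y. (F y - F x) / (y - x)) \<longlongrightarrow> g x) (at_right x)"
      using x(1) unfolding g0_def by (auto intro: Lim_transform_eventually)
    have "integral {- x..z} (\<lambda>t. g0 (- t)) / (z - - x) = (F (- z) - F x) / (- z - x)"
      if "- x < z" "z < - a" for z
    proof -
      have I: "integral {- x..z} (\<lambda>t. g0 (- t)) = F x - F (- z)"
        using Henstock_Kurzweil_Integration.integral_reflect_real[where f=g0 and a="- z" and b=x]
          F_diff[of "- z" x] that by simp
      have "z + x \<noteq> 0" "- z - x \<noteq> 0" using that by auto
      then show ?thesis unfolding I by (simp add: field_simps)
    qed
    then have "eventually (\<lambda>z. integral {- x..z} (\<lambda>t. g0 (- t)) / (z - - x) = (F (- z) - F x) / (- z - x)) (at_right (- x))"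
      unfolding eventually_at_right_field using x by (intro exI[of _ "- a"]) auto
    with left[OF x(3)] show "((\<lambda>y. (F y - F x) / (y - x)) \<longlongrightarrow> g x) (at_left x)"
      using x(1) unfolding filterlim_at_left_to_right g0_def by (auto intro: Lim_transform_eventually)
  qed
  have F_eq: "F y = integral {a..y} g" if "y \<in> {a<..<b}" for y
    unfolding F_def g0_def using that by (intro integral_cong) auto
  have deriv: "((\<lambda>y. integral {a..y} g) has_real_derivative g x) (at x)"
    if "x \<in> {a<..<b}" "x \<notin> N1" "- x \<notin> N2" for x
    by (rule has_field_derivative_transform_within_open[OF F_deriv[OF that] open_greaterThanLessThan that(1) F_eq])
  show ?thesis
  proof (rule that[of "N1 \<union> uminus ` N2"])
    show "negligible (N1 \<union> uminus ` N2)"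
      using N1 negligible_uminus_image[OF N2] by auto
    fix x assume "x \<in> {a<..<b} - (N1 \<union> uminus ` N2)"
    moreover have "- x \<notin> N2" if "x \<notin> uminus ` N2"
      using that by (metis image_eqI minus_minus)
    ultimately show "((\<lambda>y. integral {a..y} g) has_real_derivative g x) (at x)"
      by (intro deriv) auto
  qed
qed

section \<open>One-variable estimates\<close>

lemma integral_square_ge:
  fixes g :: "real \<Rightarrow> real"
  assumes g: "g integrable_on {a..b}" and g2: "(\<lambda>x. (g x)\<^sup>2) integrable_on {a..b}" and "a < b"
  shows "(integral {a..b} g)\<^sup>2 / (b - a) \<le> integral {a..b} (\<lambda>x. (g x)\<^sup>2)"
proof -
  define I where "I = integral {a..b} g"
  define c where "c = I / (b - a)"
  have cg: "(\<lambda>x. 2 * c * g x) integrable_on {a..b}" using integrable_cmul[OF g, of "2 * c"] by simp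
  have sq: "(\<lambda>x. (g x - c)\<^sup>2) = (\<lambda>x. (g x)\<^sup>2 - 2 * c * g x + c\<^sup>2)"
    by (simp add: power2_eq_square algebra_simps)
  have sq_int: "(\<lambda>x. (g x - c)\<^sup>2) integrable_on {a..b}"
    unfolding sq by (intro integrable_add integrable_diff g2 cg integrable_const_ivl)
  \<comment> \<open>c is the mean value of g, and the variance of g about it is nonnegative\<close>
  have "0 \<le> integral {a..b} (\<lambda>x. (g x - c)\<^sup>2)"
    using sq_int by (rule integral_nonneg) simp
  also have "\<dots> = integral {a..b} (\<lambda>x. (g x)\<^sup>2) - 2 * c * I + c\<^sup>2 * (b - a)"
  proof -
    have "integral {a..b} (\<lambda>x. (g x)\<^sup>2 - 2 * c * g x + c\<^sup>2)
        = integral {a..b} (\<lambda>x. (g x)\<^sup>2) - integral {a..b} (\<lambda>x. 2 * c * g x) + integral {a..b} (\<lambda>x. c\<^sup>2)"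
      by (simp only: integral_add[OF integrable_diff[OF g2 cg] integrable_const_ivl] integral_diff[OF g2 cg])
    then show ?thesis unfolding sq I_def using \<open>a < b\<close> by simp
  qed
  also have "2 * c * I - c\<^sup>2 * (b - a) = I\<^sup>2 / (b - a)"
  proof -
    have "c * (b - a) = I" unfolding c_def using \<open>a < b\<close> by simp
    then have "2 * c * I - c\<^sup>2 * (b - a) = c * I" by (simp add: power2_eq_square)
    then show ?thesis unfolding c_def by (simp add: power2_eq_square)
  qed
  ultimately show ?thesis unfolding I_def by linarith
qed

lemma le_if_locally_right_mono_except_countable:
  fixes f :: "real \<Rightarrow> real"
  assumes cont: "continuous_on {a..b} f" and "countable E" and "a \<le> b"
    and loc: "\<And>x. x \<in> {a..<b} - E \<Longrightarrow> \<exists>r>x. \<forall>z. x < z \<and> z < r \<longrightarrow> f x \<le> f z"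
  shows "f a \<le> f b"
proof (rule ccontr)
  assume "\<not> f a \<le> f b"
  then have "uncountable {f b<..<f a}" by (simp add: uncountable_open_interval)
  then obtain y where y: "f b < y" "y < f a" "y \<notin> f ` E"
    by (metis \<open>countable E\<close> countable_image countable_subset greaterThanLessThan_iff subsetI)
  define S where "S = {x\<in>{a..b}. y \<le> f x}"
  have "closed S"
    using continuous_closed_preimage[OF cont closed_atLeastAtMost closed_atLeast, of y]
    unfolding S_def by (simp add: vimage_def Int_def conj_commute)
  moreover have "a \<in> S" "bdd_above S"
    using y \<open>a \<le> b\<close> unfolding S_def by (auto intro: bdd_aboveI[of _ b])
  ultimately have s: "Sup S \<in> S" using closed_contains_Sup by blast
  define s where "s = Sup S"
  have s_ab: "a \<le> s" "s \<le> b" "y \<le> f s" using s unfolding S_def s_def by auto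
  with y have "s < b" by (metis order.not_eq_order_implies_strict not_le)
  have beyond: "f z < y" if "z \<in> {a..b}" "s < z" for z
    using cSup_upper[OF _ \<open>bdd_above S\<close>, of z] that unfolding S_def s_def by force
  \<comment> \<open>by continuity f s > y would persist just right of s\<close>
  have "f s = y"
  proof (rule ccontr)
    assume "f s \<noteq> y"
    with s_ab have "f s - y > 0" by simp
    then obtain d where "d > 0" and d: "\<And>z. z \<in> {a..b} \<Longrightarrow> dist z s < d \<Longrightarrow> dist (f z) (f s) < f s - y"
      using cont s_ab unfolding continuous_on_iff by (metis atLeastAtMost_iff)
    define z where "z = min (s + d/2) b"
    have "z \<in> {a..b}" "s < z" "dist z s < d"
      using \<open>d > 0\<close> \<open>s < b\<close> s_ab unfolding z_def dist_real_def by auto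
    with d beyond show False unfolding dist_real_def by fastforce
  qed
  then have "s \<in> {a..<b} - E" using y(3) s_ab \<open>s < b\<close> by auto
  then obtain r where "r > s" and r: "\<And>z. s < z \<Longrightarrow> z < r \<Longrightarrow> f s \<le> f z" using loc by blast
  define z where "z = min ((s + r)/2) b"
  have "z \<in> {a..b}" "s < z" "z < r"
    using \<open>r > s\<close> \<open>s < b\<close> s_ab unfolding z_def by (auto simp: min_less_iff_disj)
  with r beyond \<open>f s = y\<close> show False by fastforce
qed

lemma half_le_sum_squares_div:
  fixes L d1 d2 :: real
  assumes "0 < L" "L \<le> d1 + d2"
  shows "L / 2 \<le> (d1\<^sup>2 + d2\<^sup>2) / L"
proof -
  have "L\<^sup>2 \<le> (d1 + d2)\<^sup>2" using assms by (intro power_mono) auto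
  also have "\<dots> \<le> 2 * (d1\<^sup>2 + d2\<^sup>2)" using sum_squares_ge_zero[of "d1 - d2" 0]
    by (simp add: power2_eq_square algebra_simps)
  finally show ?thesis using \<open>0 < L\<close> by (simp add: field_simps power2_eq_square)
qed

section \<open>Sobolev maps\<close>

lemma W12_deriv_ae:
  assumes "W12 a b f" "a < b"
  obtains g N where "g integrable_on {a..b}" "(\<lambda>x. (g x)\<^sup>2) integrable_on {a..b}"
    "f b - f a = integral {a..b} g" "negligible N" "\<And>x. x \<in> {a..b} - N \<Longrightarrow> deriv f x = g x"
proof -
  obtain g where "g absolutely_integrable_on {a..b}" and g2: "(\<lambda>x. (g x)\<^sup>2) integrable_on {a..b}"
    and f: "\<forall>x\<in>{a..b}. f x = f a + integral {a..x} g"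
    using assms(1) unfolding W12_def by blast
  then have g: "g integrable_on {a..b}" using set_lebesgue_integral_eq_integral(1) by blast
  obtain N where "negligible N" and
    D: "\<And>x. x \<in> {a<..<b} - N \<Longrightarrow> ((\<lambda>y. integral {a..y} g) has_real_derivative g x) (at x)"
    using integral_has_real_derivative_ae[OF g] by blast
  have "deriv f x = g x" if x: "x \<in> {a..b} - (N \<union> {a, b})" for x
  proof -
    have "x \<in> {a<..<b}" using x by auto
    have "((\<lambda>y. f a + integral {a..y} g) has_real_derivative g x) (at x)"
      using DERIV_add[OF DERIV_const D[of x]] x by simp
    moreover have "f a + integral {a..y} g = f y" if "y \<in> {a<..<b}" for y
      using bspec[OF f, of y] that by simp
    ultimately have "(f has_real_derivative g x) (at x)"
      using has_field_derivative_transform_within_open[OF _ open_greaterThanLessThan \<open>x \<in> {a<..<b}\<close>]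
      by blast
    then show ?thesis by (rule DERIV_imp_deriv)
  qed
  moreover have "f b - f a = integral {a..b} g" using bspec[OF f, of b] \<open>a < b\<close> by simp
  moreover have "negligible (N \<union> {a, b})" using \<open>negligible N\<close> by simp
  ultimately show ?thesis using that g g2 by blast
qed

lemma W12_deriv_square:
  assumes "W12 a b f" "a < b"
  shows "(\<lambda>x. (deriv f x)\<^sup>2) integrable_on {a..b}"
    and "(f b - f a)\<^sup>2 / (b - a) \<le> integral {a..b} (\<lambda>x. (deriv f x)\<^sup>2)"
proof -
  obtain g N where g: "g integrable_on {a..b}" "(\<lambda>x. (g x)\<^sup>2) integrable_on {a..b}"
    "f b - f a = integral {a..b} g" "negligible N" "\<And>x. x \<in> {a..b} - N \<Longrightarrow> deriv f x = g x"
    using W12_deriv_ae[OF assms] by blast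
  show "(\<lambda>x. (deriv f x)\<^sup>2) integrable_on {a..b}"
    by (rule integrable_spike[OF g(2) g(4)]) (simp add: g(5))
  have "integral {a..b} (\<lambda>x. (deriv f x)\<^sup>2) = integral {a..b} (\<lambda>x. (g x)\<^sup>2)"
    by (rule integral_spike[OF g(4)]) (simp add: g(5))
  then show "(f b - f a)\<^sup>2 / (b - a) \<le> integral {a..b} (\<lambda>x. (deriv f x)\<^sup>2)"
    using integral_square_ge[OF g(1,2) \<open>a < b\<close>] g(3) by simp
qed

lemma Q2_sobolev_Dir_ge:
  assumes "Q2_sobolev a b v1 v2" "a < b"
  shows "((v1 b - v1 a)\<^sup>2 + (v2 b - v2 a)\<^sup>2) / (b - a) \<le> Dir a b v1 v2"
proof -
  have W: "W12 a b v1" "W12 a b v2" using assms(1) unfolding Q2_sobolev_def by auto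
  have "Dir a b v1 v2 = integral {a..b} (\<lambda>x. (deriv v1 x)\<^sup>2) + integral {a..b} (\<lambda>x. (deriv v2 x)\<^sup>2)"
    unfolding Dir_def using W12_deriv_square(1)[OF W(1) \<open>a < b\<close>] W12_deriv_square(1)[OF W(2) \<open>a < b\<close>]
    by (rule integral_add)
  then show ?thesis
    using W12_deriv_square(2)[OF W(1) \<open>a < b\<close>] W12_deriv_square(2)[OF W(2) \<open>a < b\<close>]
    by (simp add: add_divide_distrib)
qed

section \<open>Pluri-diamonds\<close>

definition affine_slopes_near :: "(real \<Rightarrow> real) \<Rightarrow> (real \<Rightarrow> real) \<Rightarrow> real \<Rightarrow> real \<Rightarrow> real \<Rightarrow> bool" where
  "affine_slopes_near u1 u2 x d1 d2 \<longleftrightarrow>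
     (\<exists>l r c1 c2. l < x \<and> x < r \<and> (\<forall>z\<in>{l<..<r}. u1 z = d1 * z + c1 \<and> u2 z = d2 * z + c2))"

lemma affine_slopes_near_has_derivative:
  assumes "affine_slopes_near u1 u2 x d1 d2"
  shows "(u1 has_real_derivative d1) (at x)" "(u2 has_real_derivative d2) (at x)"
proof -
  obtain l r c1 c2 where x: "x \<in> {l<..<r}" and u: "\<forall>z\<in>{l<..<r}. u1 z = d1 * z + c1 \<and> u2 z = d2 * z + c2"
    using assms unfolding affine_slopes_near_def by auto
  have affine: "((\<lambda>z. d * z + c) has_real_derivative d) (at x)" for d c :: real
    by (auto intro!: derivative_eq_intros)
  show "(u1 has_real_derivative d1) (at x)" "(u2 has_real_derivative d2) (at x)"
    using u by (auto intro: has_field_derivative_transform_within_open[OF affine open_greaterThanLessThan x])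
qed

lemma affine_slopes_near_right_increment:
  assumes "affine_slopes_near u1 u2 x d1 d2"
  obtains r where "r > x" "\<And>z. x < z \<Longrightarrow> z < r \<Longrightarrow>
    u1 z + u2 z - (u1 x + u2 x) = (d1 + d2) * (z - x)"
proof -
  obtain l r c1 c2 where "l < x" "x < r" and u: "\<forall>z\<in>{l<..<r}. u1 z = d1 * z + c1 \<and> u2 z = d2 * z + c2"
    using assms unfolding affine_slopes_near_def by auto
  then show ?thesis
    using that[of r] by (simp add: algebra_simps)
qed

lemma is_interval_open_hull_subset:
  fixes I :: "real set"
  assumes "is_interval I" "I \<noteq> {}" "bdd_below I" "bdd_above I"
  shows "{Inf I<..<Sup I} \<subseteq> I"
proof
  fix y assume "y \<in> {Inf I<..<Sup I}"
  then obtain i1 i2 where "i1 \<in> I" "i1 < y" "i2 \<in> I" "y < i2"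
    using assms(2-4) cInf_less_iff[of I y] less_cSup_iff[of I y] by auto
  then show "y \<in> I" using assms(1) unfolding is_interval_1 by (meson less_imp_le)
qed

lemma diagonal_affine_slopes_near:
  fixes I :: "real set"
  assumes "is_interval I" "bdd_below I" "bdd_above I" "x \<in> I" "x \<notin> {Inf I, Sup I}"
    and "\<forall>z\<in>I. u1 z = z + p \<and> u2 z = z + p"
  shows "affine_slopes_near u1 u2 x 1 1"
proof -
  have "Inf I < x" "x < Sup I"
    using cInf_lower[OF assms(4,2)] cSup_upper[OF assms(4,3)] assms(5) by auto
  moreover have "{Inf I<..<Sup I} \<subseteq> I"
    using assms(1-4) is_interval_open_hull_subset by blast
  ultimately show ?thesis
    unfolding affine_slopes_near_def using assms(6) by (intro exI[of _ "Inf I"] exI[of _ "Sup I"] exI[of _ p]) auto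
qed

lemma diamond_affine_slopes_near:
  assumes "diamond_on I u1 u2" "x \<in> I" "x \<notin> {Inf I, Sup I, (Inf I + Sup I) / 2}"
  shows "affine_slopes_near u1 u2 x 0 1 \<or> affine_slopes_near u1 u2 x 1 0"
proof -
  obtain a b h where "a < b" "I \<subseteq> {a..b}" "{a<..<b} \<subseteq> I" and
    u: "\<forall>z\<in>I. u1 z = h + max 0 (z - (a + b) / 2) \<and> u2 z = h + min (z - a) ((b - a) / 2)"
    using assms(1) unfolding diamond_on_def by blast
  have "bdd_below I" "bdd_above I"
    using bdd_below_mono[OF bdd_below_Icc \<open>I \<subseteq> {a..b}\<close>] bdd_above_mono[OF bdd_above_Icc \<open>I \<subseteq> {a..b}\<close>] .
  have "{a<..<b} \<noteq> {}" "I \<noteq> {}" using \<open>a < b\<close> assms(2) by auto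
  have "Inf I = a"
  proof (rule antisym)
    show "Inf I \<le> a"
      using cInf_superset_mono[OF \<open>{a<..<b} \<noteq> {}\<close> \<open>bdd_below I\<close> \<open>{a<..<b} \<subseteq> I\<close>] \<open>a < b\<close> by simp
    show "a \<le> Inf I" using \<open>I \<noteq> {}\<close> \<open>I \<subseteq> {a..b}\<close> by (intro cInf_greatest) auto
  qed
  moreover have "Sup I = b"
  proof (rule antisym)
    show "b \<le> Sup I"
      using cSup_subset_mono[OF \<open>{a<..<b} \<noteq> {}\<close> \<open>bdd_above I\<close> \<open>{a<..<b} \<subseteq> I\<close>] \<open>a < b\<close> by simp
    show "Sup I \<le> b" using \<open>I \<noteq> {}\<close> \<open>I \<subseteq> {a..b}\<close> by (intro cSup_least) auto
  qed
  ultimately have x: "a < x" "x < b" "x \<noteq> (a + b) / 2"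
    using assms(2,3) \<open>I \<subseteq> {a..b}\<close> by (auto simp: order_less_le)
  show ?thesis
  proof (cases "x < (a + b) / 2")
    case True
    have "u1 z = 0 * z + h \<and> u2 z = 1 * z + (h - a)" if "z \<in> {a<..<(a + b) / 2}" for z
    proof -
      have "z \<in> I" using that \<open>{a<..<b} \<subseteq> I\<close> by auto
      with u that show ?thesis by (simp add: max_def min_def)
    qed
    with x True have "affine_slopes_near u1 u2 x 0 1"
      unfolding affine_slopes_near_def by blast
    then show ?thesis ..
  next
    case False
    have "u1 z = 1 * z + (h - (a + b) / 2) \<and> u2 z = 0 * z + (h + (b - a) / 2)"
      if "z \<in> {(a + b) / 2<..<b}" for z
    proof -
      have "z \<in> I" using that \<open>{a<..<b} \<subseteq> I\<close> by auto
      with u that show ?thesis by (simp add: max_def min_def)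
    qed
    with x False have "affine_slopes_near u1 u2 x 1 0"
      unfolding affine_slopes_near_def by (metis greaterThanLessThan_iff linorder_neqE_linordered_idom)
    then show ?thesis ..
  qed
qed

lemma pluri_diamond_affine_slopes_near:
  assumes "pluri_diamond u1 u2"
  obtains E where "countable E"
    "\<And>x. x \<in> {0..1} - E \<Longrightarrow> \<exists>(d1, d2)\<in>{(1, 1), (0, 1), (1, 0)}. affine_slopes_near u1 u2 x d1 d2"
proof -
  obtain \<I> where "countable \<I>" "\<Union>\<I> = {0..1}" and pieces: "\<And>I. I \<in> \<I> \<Longrightarrow> is_interval I \<and>
           (diamond_on I u1 u2 \<or> (\<exists>p. \<forall>x\<in>I. u1 x = x + p \<and> u2 x = x + p))"
    using assms unfolding pluri_diamond_def by blast
  define E where "E = (\<Union>I\<in>\<I>. {Inf I, Sup I, (Inf I + Sup I) / 2})"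
  have "\<exists>(d1, d2)\<in>{(1, 1), (0, 1), (1, 0)}. affine_slopes_near u1 u2 x d1 d2"
    if x_in: "x \<in> {0..1} - E" for x
  proof -
    obtain I where I: "I \<in> \<I>" "x \<in> I" using x_in \<open>\<Union>\<I> = {0..1}\<close> by blast
    then have "I \<subseteq> {0..1}" using \<open>\<Union>\<I> = {0..1}\<close> by blast
    then have "bdd_below I" "bdd_above I"
      by (rule bdd_below_mono[OF bdd_below_Icc], rule bdd_above_mono[OF bdd_above_Icc])
    moreover have x: "x \<notin> {Inf I, Sup I, (Inf I + Sup I) / 2}" using x_in I unfolding E_def by blast
    moreover have "is_interval I" using pieces[OF I(1)] by blast
    ultimately consider "affine_slopes_near u1 u2 x 1 1" | "affine_slopes_near u1 u2 x 0 1"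
      | "affine_slopes_near u1 u2 x 1 0"
    proof -
      from pieces[OF I(1)] consider "diamond_on I u1 u2" | p where "\<forall>z\<in>I. u1 z = z + p \<and> u2 z = z + p"
        by blast
      then show thesis
      proof cases
        case 1
        with diamond_affine_slopes_near[OF _ I(2) x] that show thesis by blast
      next
        case 2
        with diagonal_affine_slopes_near[OF \<open>is_interval I\<close> \<open>bdd_below I\<close> \<open>bdd_above I\<close> I(2)] x that
        show thesis by blast
      qed
    qed
    then show ?thesis by cases (auto intro: bexI[of _ "(1, 1)"] bexI[of _ "(0, 1)"] bexI[of _ "(1, 0)"])
  qed
  moreover have "countable E" unfolding E_def using \<open>countable \<I>\<close> by auto
  ultimately show ?thesis using that by blast
qed

lemma pluri_diamond_increment_ge:
  assumes pd: "pluri_diamond u1 u2" and "0 \<le> a" "a \<le> b" "b \<le> 1"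
  shows "b - a \<le> (u1 b - u1 a) + (u2 b - u2 a)"
proof -
  obtain E where "countable E" and slopes:
    "\<And>x. x \<in> {0..1} - E \<Longrightarrow> \<exists>(d1, d2)\<in>{(1, 1), (0, 1), (1, 0)}. affine_slopes_near u1 u2 x d1 d2"
    using pluri_diamond_affine_slopes_near[OF pd] by blast
  define f where "f z = u1 z + u2 z - z" for z
  have "continuous_on {0..1} f"
    using pd unfolding pluri_diamond_def f_def by (auto intro!: continuous_intros)
  then have "continuous_on {a..b} f" by (rule continuous_on_subset) (use assms in auto)
  moreover have "\<exists>r>x. \<forall>z. x < z \<and> z < r \<longrightarrow> f x \<le> f z" if x: "x \<in> {a..<b} - E" for x
  proof -
    obtain d1 d2 where d: "(d1, d2) \<in> {(1, 1), (0, 1), (1, 0)}" "affine_slopes_near u1 u2 x d1 d2"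
      using slopes[of x] x assms by auto
    obtain r where "r > x" and r: "\<And>z. x < z \<Longrightarrow> z < r \<Longrightarrow> u1 z + u2 z - (u1 x + u2 x) = (d1 + d2) * (z - x)"
      using affine_slopes_near_right_increment[OF d(2)] by blast
    \<comment> \<open>f grows with slope d1 + d2 - 1, which is nonnegative for all three slope pairs\<close>
    have "f x \<le> f z" if "x < z" "z < r" for z
      using r[OF that] d(1) that unfolding f_def by auto
    with \<open>r > x\<close> show ?thesis by blast
  qed
  ultimately have "f a \<le> f b"
    using le_if_locally_right_mono_except_countable \<open>countable E\<close> \<open>a \<le> b\<close> by blast
  then show ?thesis unfolding f_def by simp
qed

lemma pluri_diamond_Dir_le:
  assumes pd: "pluri_diamond u1 u2" and "0 \<le> a" "a \<le> b" "b \<le> 1"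
  shows "Dir a b u1 u2 \<le> 2 * (b - a)"
proof -
  obtain E where "countable E" and slopes:
    "\<And>x. x \<in> {0..1} - E \<Longrightarrow> \<exists>(d1, d2)\<in>{(1, 1), (0, 1), (1, 0)}. affine_slopes_near u1 u2 x d1 d2"
    using pluri_diamond_affine_slopes_near[OF pd] by blast
  define F where "F x = (deriv u1 x)\<^sup>2 + (deriv u2 x)\<^sup>2" for x
  have "F x \<le> 2" if x: "x \<in> {a..b} - E" for x
  proof -
    obtain d1 d2 where d: "(d1, d2) \<in> {(1, 1), (0, 1), (1, 0)}" "affine_slopes_near u1 u2 x d1 d2"
      using slopes[of x] x assms by auto
    then have "F x = d1\<^sup>2 + d2\<^sup>2"
      unfolding F_def using affine_slopes_near_has_derivative DERIV_imp_deriv by metis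
    with d(1) show ?thesis by auto
  qed
  moreover have "negligible E"
    using \<open>countable E\<close>
    by (simp add: negligible_iff_null_sets null_sets_completionI countable_imp_null_set_lborel)
  ultimately have "integral {a..b} F = integral {a..b} (\<lambda>x. min (F x) 2)"
    by (intro integral_spike[of E]) auto
  also have "\<dots> \<le> 2 * (b - a)"
  proof (cases "(\<lambda>x. min (F x) 2) integrable_on {a..b}")
    case True
    then have "integral {a..b} (\<lambda>x. min (F x) 2) \<le> integral {a..b} (\<lambda>x. 2)"
      by (intro integral_le) auto
    then show ?thesis using \<open>a \<le> b\<close> by simp
  qed (use \<open>a \<le> b\<close> in \<open>simp add: not_integrable_integral\<close>)
  finally show ?thesis unfolding Dir_def F_def .
qed

theorem mainTheorem4:
  fixes u1 u2 v1 v2 :: "real \<Rightarrow> real" and a b :: real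
  assumes "pluri_diamond u1 u2"
    and "0 \<le> a" and "a < b" and "b \<le> 1"
    and "dir_minimizing a b v1 v2"
    and "v1 a = u1 a" and "v2 a = u2 a" and "v1 b = u1 b" and "v2 b = u2 b"
  shows "Dir a b u1 u2 \<le> 4 * Dir a b v1 v2"
proof -
  have "Q2_sobolev a b v1 v2" using assms(5) unfolding dir_minimizing_def by blast
  then have "((v1 b - v1 a)\<^sup>2 + (v2 b - v2 a)\<^sup>2) / (b - a) \<le> Dir a b v1 v2"
    using \<open>a < b\<close> by (rule Q2_sobolev_Dir_ge)
  then have "((u1 b - u1 a)\<^sup>2 + (u2 b - u2 a)\<^sup>2) / (b - a) \<le> Dir a b v1 v2"
    by (simp only: assms(6-9))
  moreover have "(b - a) / 2 \<le> ((u1 b - u1 a)\<^sup>2 + (u2 b - u2 a)\<^sup>2) / (b - a)"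
    using half_le_sum_squares_div pluri_diamond_increment_ge[OF assms(1)] assms(2-4) by simp
  moreover have "Dir a b u1 u2 \<le> 2 * (b - a)"
    using pluri_diamond_Dir_le[OF assms(1)] assms(2-4) by simp
  ultimately show ?thesis by linarith
qed

end
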